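(* Let $\mu,\nu$ be partitions of $n$ with $p(\mu)\le p(\nu)$. Then: (1) for every $0\le s\le p(\nu)-p(\mu)$, \[ \sum_{\mu':\,|\mu'|=n,\ p(\mu')=p(\mu)+s} t^\mu_{\mu'}\,t^{\mu'}_\nu=\binom{p(\nu)-p(\mu)}{s}t^\mu_\nu; \] (2) for integers $s_1,\dots,s_{k-1}\ge0$ with $\sum_{i=1}^{k-1}s_i\le p(\nu)-p(\mu)$, \[ \sum_{\substack{\mu_1,\dots,\mu_{k-1}\text{ partitions of }n:\\ p(\mu_i)=p(\mu_{i-1})+s_i}} t^{\mu}_{\mu_1}t^{\mu_1}_{\mu_2}\cdots t^{\mu_{k-1}}_{\nu}=\frac{(p(\nu)-p(\mu))!}{s_1!\cdots s_{k-1}!\,\big(p(\nu)-p(\mu)-\sum_i s_i\big)!}\,t^\mu_\nu, \] where $\mu_0:=\mu$.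
   Context: Let $\mathbb H$ be the upper half plane and $\mathcal O(\mathbb H)$ its ring of holomorphic functions. Let $V=\mathbb C[a_{-1},a_{-2},\dots,b_0,b_{-1},\dots]$ be the vacuum module of the Heisenberg Lie algebra $[a_m,b_n]=\delta_{m,-n}C$ (with $a_m1=0$ for $m\ge0$, $b_n1=0$ for $n>0$, $C=1$), a vertex algebra with fields $a(z)=\sum a_nz^{-n-1}$, $b(z)=\sum b_nz^{-n}$. Let $\mathscr D^{ch}(\mathbb H)=V\otimes_{\mathbb C[b_0]}\mathcal O(\mathbb H)$ ($b_0\mapsto\tau$, $b=b_0$), with $Y(f,z)=\sum_{i\ge0}\frac{f^{(i)}(b)}{i!}(\sum_{n\ne0}b_nz^{-n})^i$ for $f\in\mathcal O(\mathbb H)$. For a partition $\mu=(\mu_{(1)}\ge\dots\ge\mu_{(d)}\ge1)$, $p(\mu)=d$, $|\mu|=\sum\mu_{(i)}$ and $b_{-\mu}=b_{-\mu_{(1)}}\cdots b_{-\mu_{(d)}}$. $SL(2,\mathbb R)$ acts on the right by vertex algebra automorphisms $\pi(g)$, integrating the zero modes of $E=-a_{-1}$, $F=a_{-1}b_0^2+2b_{-1}$, $H=-2a_{-1}b_0$ via $\pi(e^x)=\exp(-x_{(0)})$; for $g=\begin{pmatrix}\alpha&\beta\\\gamma&\delta\end{pmatrix}$, $\pi(g)a_{-1}=a_{-1}(\gamma b+\delta)^2+2\gamma^2b_{-1}$ and $\pi(g)f(b)=f(\frac{\alpha b+\beta}{\gamma b+\delta})$. For each partition $\mu$ there are unique constants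 $t^\mu_\nu$ (for partitions $\nu$ with $|\nu|=|\mu|$, $p(\nu)\ge p(\mu)$), independent of $g$, such that for all $g\in SL(2,\mathbb R)$ \[ \pi(g)(b_{-\mu}\cdot1)=\sum_{\nu:\,p(\nu)\ge p(\mu)}t^\mu_\nu(-\gamma)^{p(\nu)-p(\mu)}\,b_{-\nu}\,(\gamma b+\delta)^{-p(\mu)-p(\nu)}. \] *)

theory Defs
  imports Complex_Main "HOL-Library.Multiset"
begin

text \<open>A partition of n: a non-increasing list of positive naturals summing to n.
  p(mu) = length mu, |mu| = sum_list mu.\<close>
definition is_partition :: "nat \<Rightarrow> nat list \<Rightarrow> bool" where
  "is_partition n xs \<longleftrightarrow> sorted_wrt (\<ge>) xs \<and> (\<forall>x\<in>set xs. 0 < x) \<and> sum_list xs = n"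

definition is_composition :: "nat \<Rightarrow> nat list \<Rightarrow> bool" where
  "is_composition m xs \<longleftrightarrow> (\<forall>x\<in>set xs. 0 < x) \<and> sum_list xs = m"

text \<open>The constants t^mu_nu: coefficient of b_{-nu} in the expansion of
  pi(g)(b_{-mu} 1) = prod_j [z^{mu_j}] phi(b + sum_{m>=1} b_{-m} z^m),
  phi(x) = (alpha x + beta)/(gamma x + delta), using
  phi^(i)(x)/i! = (-gamma)^(i-1) (gamma x + delta)^(-i-1).
  Expanding, each part mu_j is replaced by a composition of mu_j; t^mu_nu counts
  the tuples of compositions whose combined multiset of parts is nu.\<close>
definition tcoef :: "nat list \<Rightarrow> nat list \<Rightarrow> nat" where
  "tcoef mu nu = card {cs. length cs = length mu \<and>
      (\<forall>j<length mu. is_composition (mu ! j) (cs ! j)) \<and> mset (concat cs) = mset nu}"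

fun tchain :: "nat list \<Rightarrow> nat list list \<Rightarrow> nat list \<Rightarrow> nat" where
  "tchain mu [] nu = tcoef mu nu"
| "tchain mu (m # ms) nu = tcoef mu m * tchain m ms nu"

end

theory Submission
  imports Defs "HOL-Computational_Algebra.Polynomial"
begin

(* Merging back the blocks of a two-step refinement \<mu> \<rightarrow> \<mu>' \<rightarrow> \<nu> that come from
   the same part of \<mu> turns it into a one-step refinement \<mu> \<rightarrow> \<nu> together with a grouping of
   each of its compositions into consecutive blocks, and conversely. As t^\<mu>'_\<nu> only depends on
   the multiset of parts of \<mu>', the sum over intermediate partitions \<mu>' is a sum over all tuples
   of compositions of the parts of \<mu>. A composition with l parts has (1 + X)^(l - 1) as generating
   polynomial of its groupings by number of extra blocks; these polynomials multiply over the
   parts of \<mu> (a convolution over sub-multisets of \<nu>) and there are p(\<nu>) - p(\<mu>) cuts in total.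
   So the two-step count with p(\<mu>') = p(\<mu>) + s is the coefficient of X^s in
   t^\<mu>_\<nu> (1 + X)^(p(\<nu>) - p(\<mu>)), which is (1); (2) follows from (1) by induction on the
   length of the chain. *)

lemma length_le_sum_list_nat: "0 \<notin> set xs \<Longrightarrow> length xs \<le> sum_list (xs :: nat list)"
  by (induction xs) (auto simp: Suc_le_eq)

lemma length_le_length_concat: "[] \<notin> set xss \<Longrightarrow> length xss \<le> length (concat xss)"
proof (induction xss)
  case (Cons xs xss)
  then have "1 \<le> length xs" by (cases xs) auto
  with Cons show ?case by simp
qed simp

lemma sum_list_concat_nat: "sum_list (concat xss) = sum_list (map sum_list (xss :: nat list list))"
  by (induction xss) auto

lemma finite_submultisets: "finite {A. A \<subseteq># (N :: 'a multiset)}"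
proof -
  have "{A. A \<subseteq># N} \<subseteq> mset ` {xs. set xs \<subseteq> set_mset N \<and> length xs \<le> size N}"
  proof
    fix A assume "A \<in> {A. A \<subseteq># N}"
    moreover obtain xs where "A = mset xs" by (metis ex_mset)
    ultimately show "A \<in> mset ` {xs. set xs \<subseteq> set_mset N \<and> length xs \<le> size N}"
      by (metis (mono_tags, lifting) image_eqI mem_Collect_eq set_mset_mono set_mset_mset
          size_mset size_mset_mono)
  qed
  then show ?thesis
    by (rule finite_subset) (simp add: finite_lists_length_le)
qed

lemma sum_submultisets_swap:
  "(\<Sum>A | A \<subseteq># N. f A (N - A)) = (\<Sum>A | A \<subseteq># N. f (N - A) A)"
  by (rule sum.reindex_bij_witness[of _ "\<lambda>A. N - A" "\<lambda>A. N - A"])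
    (auto simp: subset_mset.diff_diff_right)

lemma is_composition_iff: "is_composition a c \<longleftrightarrow> 0 \<notin> set c \<and> sum_list c = a"
proof -
  have "(\<forall>x\<in>set c. 0 < x) \<longleftrightarrow> 0 \<notin> set c"
    by (induction c) auto
  then show ?thesis
    by (simp add: is_composition_def)
qed

definition compositions :: "nat \<Rightarrow> nat list set" where
  "compositions a = {c. is_composition a c}"

lemma mem_compositions_iff: "c \<in> compositions a \<longleftrightarrow> 0 \<notin> set c \<and> sum_list c = a"
  by (simp add: compositions_def is_composition_iff)

lemma finite_compositions: "finite (compositions a)"
proof -
  have "compositions a \<subseteq> {c. set c \<subseteq> {0..a} \<and> length c \<le> a}"
    using length_le_sum_list_nat member_le_sum_list
    by (fastforce simp: mem_compositions_iff)
  then show ?thesis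
    by (rule finite_subset) (simp add: finite_lists_length_le)
qed

lemma finite_partitions: "finite {xs. is_partition n xs}"
  by (rule finite_subset[OF _ finite_compositions[of n]])
    (auto simp: compositions_def is_composition_def is_partition_def)

lemma zero_not_in_partition: "is_partition n \<mu> \<Longrightarrow> 0 \<notin> set \<mu>"
  by (auto simp: is_partition_def)

lemma partition_eqI:
  assumes "is_partition n xs" "is_partition m ys" "mset xs = mset ys"
  shows "xs = ys"
proof -
  have "sort ys = rev xs" "sort ys = rev ys"
    using assms by (auto intro!: properties_for_sort simp: is_partition_def sorted_wrt_rev)
  then show ?thesis by simp
qed

section \<open>Refinements\<close>

definition composition_tuples :: "nat list \<Rightarrow> nat list list set" where
  "composition_tuples c = {cs. map sum_list cs = c \<and> 0 \<notin> set (concat cs)}"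

definition refinements :: "nat list \<Rightarrow> nat multiset \<Rightarrow> nat list list set" where
  "refinements c N = {cs \<in> composition_tuples c. mset (concat cs) = N}"

definition refinement_count :: "nat list \<Rightarrow> nat multiset \<Rightarrow> nat" where
  "refinement_count c N = card (refinements c N)"

lemma tcoef_eq_refinement_count: "tcoef \<mu> \<nu> = refinement_count \<mu> (mset \<nu>)"
proof -
  have "(length cs = length \<mu> \<and> (\<forall>j<length \<mu>. is_composition (\<mu> ! j) (cs ! j)))
      \<longleftrightarrow> map sum_list cs = \<mu> \<and> 0 \<notin> set (concat cs)" for cs
  proof -
    have "0 \<notin> set (concat cs) \<longleftrightarrow> (\<forall>j<length cs. 0 \<notin> set (cs ! j))"
      using all_set_conv_all_nth[of cs "\<lambda>d. 0 \<notin> set d"] by simp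
    moreover have "map sum_list cs = \<mu> \<longleftrightarrow>
        length cs = length \<mu> \<and> (\<forall>j<length \<mu>. sum_list (cs ! j) = \<mu> ! j)"
      by (auto simp: list_eq_iff_nth_eq)
    ultimately show ?thesis
      unfolding is_composition_iff by metis
  qed
  then have "{cs. length cs = length \<mu> \<and> (\<forall>j<length \<mu>. is_composition (\<mu> ! j) (cs ! j))
      \<and> mset (concat cs) = mset \<nu>} = refinements \<mu> (mset \<nu>)"
    unfolding refinements_def composition_tuples_def by blast
  then show ?thesis
    by (simp add: tcoef_def refinement_count_def)
qed

lemma composition_tuples_Nil [simp]: "composition_tuples [] = {[]}"
  by (auto simp: composition_tuples_def)

lemma composition_tuples_Cons:
  "composition_tuples (a # c) = (\<lambda>(d, ds). d # ds) ` (compositions a \<times> composition_tuples c)"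
  by (auto simp: composition_tuples_def mem_compositions_iff map_eq_Cons_conv)

lemma sum_composition_tuples_Cons:
  "(\<Sum>cs\<in>composition_tuples (a # c). f cs) = (\<Sum>d\<in>compositions a. \<Sum>ds\<in>composition_tuples c. f (d # ds))"
proof -
  have "inj_on (\<lambda>(d, ds). d # ds) (compositions a \<times> composition_tuples c)"
    by (auto simp: inj_on_def)
  then show ?thesis
    by (simp add: composition_tuples_Cons sum.reindex sum.cartesian_product split_def)
qed

lemma finite_composition_tuples: "finite (composition_tuples c)"
  by (induction c) (simp_all add: composition_tuples_Cons finite_compositions)

lemma finite_refinements: "finite (refinements c N)"
  using finite_composition_tuples by (simp add: refinements_def)

lemma Nil_notin_composition_tuple:
  "cs \<in> composition_tuples c \<Longrightarrow> 0 \<notin> set c \<Longrightarrow> [] \<notin> set cs"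
  by (force simp: composition_tuples_def)

lemma length_le_length_concat_composition_tuple:
  "cs \<in> composition_tuples c \<Longrightarrow> 0 \<notin> set c \<Longrightarrow> length c \<le> length (concat cs)"
  using length_le_length_concat[OF Nil_notin_composition_tuple]
  by (force simp: composition_tuples_def)

lemma length_le_size_if_refinement_count_nonzero:
  assumes "refinement_count c N \<noteq> 0" "0 \<notin> set c"
  shows "length c \<le> size N"
proof -
  obtain cs where "cs \<in> refinements c N"
    using assms(1) by (force simp: refinement_count_def)
  then show ?thesis
    using length_le_length_concat_composition_tuple assms(2)
    by (fastforce simp: refinements_def)
qed

lemma refinement_count_Nil: "refinement_count [] N = (if N = {#} then 1 else 0)"
proof -
  have "refinements [] N = (if N = {#} then {[]} else {})"
    by (auto simp: refinements_def)
  then show ?thesis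
    by (simp add: refinement_count_def)
qed

lemma refinements_single:
  "refinements [a] N = (\<lambda>d. [d]) ` {d \<in> compositions a. mset d = N}"
  by (auto simp: refinements_def composition_tuples_Cons)

lemma refinement_count_single:
  "refinement_count [a] N = card {d \<in> compositions a. mset d = N}"
  by (simp add: refinement_count_def refinements_single card_image inj_on_def)

lemma refinements_append:
  "refinements (x @ y) N = (\<lambda>(ds, es). ds @ es) `
     (\<Union>A\<in>{A. A \<subseteq># N}. refinements x A \<times> refinements y (N - A))"
    (is "_ = _ ` ?S")
proof (intro set_eqI iffI)
  fix cs assume "cs \<in> refinements (x @ y) N"
  then obtain ds es where "cs = ds @ es" "map sum_list ds = x" "map sum_list es = y"
    "0 \<notin> set (concat ds)" "0 \<notin> set (concat es)" "mset (concat ds) + mset (concat es) = N"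
    by (auto simp: refinements_def composition_tuples_def map_eq_append_conv)
  then have "(ds, es) \<in> ?S" and "cs = (\<lambda>(ds, es). ds @ es) (ds, es)"
    by (auto simp: refinements_def composition_tuples_def)
  then show "cs \<in> (\<lambda>(ds, es). ds @ es) ` ?S"
    by blast
qed (auto simp: refinements_def composition_tuples_def)

lemma refinement_count_append:
  "refinement_count (x @ y) N =
     (\<Sum>A | A \<subseteq># N. refinement_count x A * refinement_count y (N - A))"
proof -
  let ?S = "\<Union>A\<in>{A. A \<subseteq># N}. refinements x A \<times> refinements y (N - A)"
  have "inj_on (\<lambda>(ds, es). ds @ es) ?S"
  proof (rule inj_onI)
    fix p q assume "p \<in> ?S" "q \<in> ?S"
    then have "length (fst p) = length (fst q)"
      by (auto simp: refinements_def composition_tuples_def dest!: map_eq_imp_length_eq)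
    moreover assume "(\<lambda>(ds, es). ds @ es) p = (\<lambda>(ds, es). ds @ es) q"
    ultimately show "p = q"
      by (cases p, cases q) simp
  qed
  moreover have "card ?S = (\<Sum>A | A \<subseteq># N. card (refinements x A \<times> refinements y (N - A)))"
    by (rule card_UN_disjoint) (auto simp: finite_submultisets finite_refinements, auto simp: refinements_def)
  ultimately show ?thesis
    unfolding refinement_count_def refinements_append
    by (simp add: card_image card_cartesian_product)
qed

lemma refinement_count_append_commute:
  "refinement_count (x @ y) N = refinement_count (y @ x) N"
  unfolding refinement_count_append
  by (subst sum_submultisets_swap) (simp add: mult.commute)

lemma refinement_count_perm:
  "mset x = mset y \<Longrightarrow> refinement_count x N = refinement_count y N"
proof (induction x arbitrary: y N)
  case (Cons a x)
  then obtain ys zs where y: "y = ys @ a # zs"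
    by (metis list.set_intros(1) set_mset_mset split_list)
  with Cons.prems have "mset x = mset (zs @ ys)"
    by (simp add: union_commute)
  then have "refinement_count ([a] @ x) N = refinement_count ([a] @ zs @ ys) N"
    by (simp only: refinement_count_append Cons.IH)
  also have "\<dots> = refinement_count y N"
    using refinement_count_append_commute[of "a # zs" ys] y by simp
  finally show ?case by simp
qed simp

section \<open>Groupings into consecutive blocks\<close>

definition groupings :: "'a list \<Rightarrow> 'a list list set" where
  "groupings d = {ds. concat ds = d \<and> [] \<notin> set ds}"

lemma groupings_Nil [simp]: "groupings [] = {[]}"
proof -
  have "concat ds = [] \<Longrightarrow> [] \<notin> set ds \<Longrightarrow> ds = []" for ds :: "'a list list"
    by (cases ds) auto
  then show ?thesis
    by (auto simp: groupings_def)
qed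

lemma groupings_Cons:
  assumes "d \<noteq> []"
  shows "groupings (x # d) =
    (\<lambda>ds. [x] # ds) ` groupings d \<union> (\<lambda>ds. (x # hd ds) # tl ds) ` groupings d"
proof (intro set_eqI iffI)
  fix ds assume ds: "ds \<in> groupings (x # d)"
  then obtain e es where ds_eq: "ds = (x # e) # es" and "e @ concat es = d" "[] \<notin> set es"
    by (cases ds) (auto simp: groupings_def append_eq_Cons_conv)
  then consider "e = []" "es \<in> groupings d" | "e # es \<in> groupings d"
    by (cases e) (auto simp: groupings_def)
  then show "ds \<in> (\<lambda>ds. [x] # ds) ` groupings d \<union> (\<lambda>ds. (x # hd ds) # tl ds) ` groupings d"
    using ds_eq by cases force+
next
  fix ds assume "ds \<in> (\<lambda>ds. [x] # ds) ` groupings d \<union> (\<lambda>ds. (x # hd ds) # tl ds) ` groupings d"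
  then obtain es where es: "es \<in> groupings d" and "ds = [x] # es \<or> ds = (x # hd es) # tl es"
    by blast
  moreover have "es \<noteq> []"
    using es assms by (auto simp: groupings_def)
  ultimately show "ds \<in> groupings (x # d)"
    by (auto simp: groupings_def neq_Nil_conv)
qed

lemma groupings_single: "groupings [x] = {[[x]]}"
proof -
  have "ds = [[x]]" if grouping: "ds \<in> groupings [x]" for ds
  proof -
    obtain b rest where ds: "ds = b # rest" and "b @ concat rest = [x]" "b \<noteq> []" "[] \<notin> set rest"
      using grouping by (cases ds) (auto simp: groupings_def)
    then have "b = [x]" "rest \<in> groupings []"
      by (auto simp: groupings_def append_eq_Cons_conv)
    then show ?thesis
      using ds by simp
  qed
  then show ?thesis
    by (auto simp: groupings_def)
qed

lemma finite_groupings: "finite (groupings d)"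
proof (induction d)
  case (Cons x d)
  then show ?case
    by (cases "d = []") (simp_all add: groupings_single groupings_Cons)
qed simp

lemma sum_groupings_Cons:
  assumes "d \<noteq> []"
  shows "(\<Sum>ds\<in>groupings (x # d). f ds) =
    (\<Sum>ds\<in>groupings d. f ([x] # ds)) + (\<Sum>ds\<in>groupings d. f ((x # hd ds) # tl ds))"
proof -
  have nonempty: "ds \<noteq> []" "hd ds \<noteq> []" if "ds \<in> groupings d" for ds
  proof -
    show "ds \<noteq> []"
      using that assms by (auto simp: groupings_def)
    then show "hd ds \<noteq> []"
      using that hd_in_set by (fastforce simp: groupings_def)
  qed
  have "inj_on (\<lambda>ds. (x # hd ds) # tl ds) (groupings d)"
    by (rule inj_onI) (metis list.collapse list.inject nonempty(1))
  moreover have "(\<lambda>ds. [x] # ds) ` groupings d \<inter> (\<lambda>ds. (x # hd ds) # tl ds) ` groupings d = {}"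
    using nonempty(2) by (force simp: eq_commute[of "[]"])
  ultimately show ?thesis
    unfolding groupings_Cons[OF assms]
    by (simp add: sum.union_disjoint finite_groupings sum.reindex inj_on_def)
qed

lemma sum_groupings_monom:
  "d \<noteq> [] \<Longrightarrow>
    (\<Sum>ds\<in>groupings d. monom 1 (length ds - 1)) = ([:1, 1:] :: 'a :: comm_semiring_1 poly) ^ (length d - 1)"
proof (induction d)
  case (Cons x d)
  show ?case
  proof (cases "d = []")
    case False
    have "length ds \<noteq> 0" if "ds \<in> groupings d" for ds
      using that False by (auto simp: groupings_def)
    then have "(\<Sum>ds\<in>groupings (x # d). monom (1 :: 'a) (length ds - 1)) =
        (monom 1 1 + 1) * (\<Sum>ds\<in>groupings d. monom 1 (length ds - 1))"
      by (simp add: sum_groupings_Cons[OF False] distrib_right sum_distrib_left mult_monom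
          sum.distrib)
    also have "monom (1 :: 'a) 1 + 1 = [:1, 1:]"
      by (simp add: monom_altdef one_pCons)
    finally show ?thesis
      using Cons False by (cases d) simp_all
  qed (simp add: groupings_single monom_0 one_pCons)
qed simp

section \<open>Two-step refinements\<close>

(* In a two-step refinement of c into N each of the size N - length c cuts of the composite
   one-step refinement is either made in the first step or not: one factor 1 + X per cut. *)
definition refinement_poly :: "nat list \<Rightarrow> nat multiset \<Rightarrow> nat poly" where
  "refinement_poly c N = smult (refinement_count c N) ([:1, 1:] ^ (size N - length c))"

lemma coeff_refinement_poly:
  "coeff (refinement_poly c N) s = (size N - length c choose s) * refinement_count c N"
proof (cases "s \<le> size N - length c")
  case False
  then have "coeff ([:1, 1:] ^ (size N - length c)) s = (0 :: nat)"
    using degree_linear_power[of "1 :: nat" "size N - length c"] by (intro coeff_eq_0) simp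
  with False show ?thesis
    by (simp add: refinement_poly_def)
qed (simp add: refinement_poly_def coeff_linear_poly_power)

lemma refinement_poly_append:
  assumes "0 \<notin> set x" "0 \<notin> set y"
  shows "refinement_poly (x @ y) N =
    (\<Sum>A | A \<subseteq># N. refinement_poly x A * refinement_poly y (N - A))"
proof -
  have "smult (refinement_count x A * refinement_count y (N - A)) ([:1, 1:] ^ (size N - length (x @ y)))
      = refinement_poly x A * refinement_poly y (N - A)" if "A \<subseteq># N" for A
  proof (cases "refinement_count x A = 0 \<or> refinement_count y (N - A) = 0")
    case False
    then have "length x \<le> size A" "length y \<le> size (N - A)"
      using assms length_le_size_if_refinement_count_nonzero by blast+
    moreover have "size N = size A + size (N - A)"
      using that by (simp add: size_Diff_submset size_mset_mono)
    ultimately have "size N - length (x @ y) = (size A - length x) + (size (N - A) - length y)"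
      by simp
    then show ?thesis
      by (simp add: refinement_poly_def power_add mult_ac)
  qed (auto simp: refinement_poly_def)
  then show ?thesis
    by (simp add: refinement_poly_def [of "x @ y"] refinement_count_append smult_sum)
qed

lemma refinements_of_compositions:
  "(\<Union>c\<in>compositions a. refinements c N) = (\<Union>d\<in>{d \<in> compositions a. mset d = N}. groupings d)"
proof (intro set_eqI)
  fix ds :: "nat list list"
  have sum_list_eq_0: "sum_list d = 0 \<longleftrightarrow> d = []" if "0 \<notin> set d" for d :: "nat list"
    using that by (cases d) auto
  have "ds \<in> (\<Union>c\<in>compositions a. refinements c N) \<longleftrightarrow>
      0 \<notin> set (map sum_list ds) \<and> sum_list (map sum_list ds) = a \<and> 0 \<notin> set (concat ds) \<and>
      mset (concat ds) = N"
    by (auto simp: refinements_def composition_tuples_def mem_compositions_iff)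
  moreover have "ds \<in> (\<Union>d\<in>{d \<in> compositions a. mset d = N}. groupings d) \<longleftrightarrow>
      [] \<notin> set ds \<and> sum_list (map sum_list ds) = a \<and> 0 \<notin> set (concat ds) \<and> mset (concat ds) = N"
    unfolding groupings_def by (auto simp: mem_compositions_iff sum_list_concat_nat)
  moreover have "0 \<notin> set (map sum_list ds) \<longleftrightarrow> [] \<notin> set ds" if "0 \<notin> set (concat ds)"
  proof -
    have "\<forall>d\<in>set ds. sum_list d = 0 \<longleftrightarrow> d = []"
      using that sum_list_eq_0 by simp
    then show ?thesis
      by (simp add: image_iff)
  qed
  ultimately show "ds \<in> (\<Union>c\<in>compositions a. refinements c N) \<longleftrightarrow>
      ds \<in> (\<Union>d\<in>{d \<in> compositions a. mset d = N}. groupings d)"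
    by blast
qed

lemma sum_compositions_monom_refinement_count:
  assumes "0 < a"
  shows "(\<Sum>c\<in>compositions a. monom (refinement_count c N) (length c - 1)) = refinement_poly [a] N"
proof -
  let ?D = "{d \<in> compositions a. mset d = N}"
  have "(\<Sum>c\<in>compositions a. monom (refinement_count c N) (length c - 1)) =
      (\<Sum>c\<in>compositions a. \<Sum>ds\<in>refinements c N. monom 1 (length ds - 1))"
  proof (intro sum.cong refl)
    fix c assume "c \<in> compositions a"
    have "length ds = length c" if "ds \<in> refinements c N" for ds
      using that by (auto simp: refinements_def composition_tuples_def)
    then have "(\<Sum>ds\<in>refinements c N. monom 1 (length ds - 1)) =
        monom (\<Sum>ds\<in>refinements c N. 1) (length c - 1)"
      by (simp add: monom_sum)
    then show "monom (refinement_count c N) (length c - 1) =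
        (\<Sum>ds\<in>refinements c N. monom 1 (length ds - 1))"
      by (metis card_eq_sum refinement_count_def)
  qed
  also have "\<dots> = (\<Sum>ds\<in>(\<Union>c\<in>compositions a. refinements c N). monom 1 (length ds - 1))"
    by (rule sum.UNION_disjoint[symmetric])
      (auto simp: finite_compositions finite_refinements, auto simp: refinements_def composition_tuples_def)
  also have "\<dots> = (\<Sum>d\<in>?D. \<Sum>ds\<in>groupings d. monom 1 (length ds - 1))"
    unfolding refinements_of_compositions
    by (rule sum.UNION_disjoint) (auto simp: finite_compositions finite_groupings, auto simp: groupings_def)
  also have "\<dots> = (\<Sum>d\<in>?D. [:1, 1:] ^ (size N - 1))"
  proof (intro sum.cong refl)
    fix d assume "d \<in> ?D"
    with assms have "d \<noteq> []" "length d = size N"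
      by (auto simp: mem_compositions_iff)
    then show "(\<Sum>ds\<in>groupings d. monom 1 (length ds - 1)) = [:1, 1:] ^ (size N - 1)"
      using sum_groupings_monom by metis
  qed
  finally show ?thesis
    by (simp add: refinement_poly_def refinement_count_single of_nat_poly)
qed

lemma sum_composition_tuples_monom_refinement_count:
  assumes "0 \<notin> set \<mu>"
  shows "(\<Sum>cs\<in>composition_tuples \<mu>.
      monom (refinement_count (concat cs) N) (length (concat cs) - length \<mu>)) = refinement_poly \<mu> N"
  using assms
proof (induction \<mu> arbitrary: N)
  case Nil
  then show ?case
    by (simp add: refinement_poly_def refinement_count_Nil monom_0)
next
  case (Cons a \<mu>)
  then have a: "0 < a" and \<mu>: "0 \<notin> set \<mu>"
    by auto
  have "(\<Sum>cs\<in>composition_tuples (a # \<mu>).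
      monom (refinement_count (concat cs) N) (length (concat cs) - length (a # \<mu>))) =
      (\<Sum>c\<in>compositions a. \<Sum>cs\<in>composition_tuples \<mu>. monom (refinement_count (c @ concat cs) N)
        ((length c - 1) + (length (concat cs) - length \<mu>)))"
    unfolding sum_composition_tuples_Cons
  proof (intro sum.cong refl)
    fix c cs assume "c \<in> compositions a" "cs \<in> composition_tuples \<mu>"
    then have "c \<noteq> []" "length \<mu> \<le> length (concat cs)"
      using a \<mu> length_le_length_concat_composition_tuple by (auto simp: mem_compositions_iff)
    then show "monom (refinement_count (concat (c # cs)) N) (length (concat (c # cs)) - length (a # \<mu>)) =
        monom (refinement_count (c @ concat cs) N) ((length c - 1) + (length (concat cs) - length \<mu>))"
      by (cases c) auto
  qed
  also have "\<dots> = (\<Sum>c\<in>compositions a. \<Sum>cs\<in>composition_tuples \<mu>. \<Sum>A | A \<subseteq># N.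
      monom (refinement_count c A) (length c - 1) *
      monom (refinement_count (concat cs) (N - A)) (length (concat cs) - length \<mu>))"
    by (simp add: refinement_count_append monom_sum mult_monom)
  also have "\<dots> = (\<Sum>A | A \<subseteq># N.
      (\<Sum>c\<in>compositions a. monom (refinement_count c A) (length c - 1)) *
      (\<Sum>cs\<in>composition_tuples \<mu>.
        monom (refinement_count (concat cs) (N - A)) (length (concat cs) - length \<mu>)))"
    by (simp add: sum_product sum.swap[of _ "{A. A \<subseteq># N}"])
  also have "\<dots> = (\<Sum>A | A \<subseteq># N. refinement_poly [a] A * refinement_poly \<mu> (N - A))"
    by (simp only: sum_compositions_monom_refinement_count[OF a] Cons.IH[OF \<mu>])
  also have "\<dots> = refinement_poly (a # \<mu>) N"
    using refinement_poly_append[of "[a]" \<mu> N] a \<mu> by simp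
  finally show ?case .
qed

lemma sum_composition_tuples_refinement_count:
  assumes "0 \<notin> set \<mu>"
  shows "(\<Sum>cs | cs \<in> composition_tuples \<mu> \<and> length (concat cs) = length \<mu> + s.
      refinement_count (concat cs) N) = (size N - length \<mu> choose s) * refinement_count \<mu> N"
proof -
  have "coeff (refinement_poly \<mu> N) s = (\<Sum>cs\<in>composition_tuples \<mu>.
      if length (concat cs) = length \<mu> + s then refinement_count (concat cs) N else 0)"
    unfolding sum_composition_tuples_monom_refinement_count[OF assms, symmetric] coeff_sum coeff_monom
    using length_le_length_concat_composition_tuple[OF _ assms] by (intro sum.cong refl) force
  then show ?thesis
    by (simp add: coeff_refinement_poly sum.inter_filter finite_composition_tuples)
qed

lemma refinements_partitions_UN:
  assumes "is_partition n \<mu>"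
  shows "(\<Union>\<mu>'\<in>{\<mu>'. is_partition n \<mu>' \<and> length \<mu>' = L}. refinements \<mu> (mset \<mu>')) =
    {cs \<in> composition_tuples \<mu>. length (concat cs) = L}"
proof (intro set_eqI iffI)
  fix cs assume "cs \<in> (\<Union>\<mu>'\<in>{\<mu>'. is_partition n \<mu>' \<and> length \<mu>' = L}. refinements \<mu> (mset \<mu>'))"
  then show "cs \<in> {cs \<in> composition_tuples \<mu>. length (concat cs) = L}"
    by (auto simp: refinements_def dest: mset_eq_length)
next
  fix cs assume cs: "cs \<in> {cs \<in> composition_tuples \<mu>. length (concat cs) = L}"
  define \<mu>' where "\<mu>' = rev (sort (concat cs))"
  have "sum_list \<mu>' = sum_list (concat cs)"
    by (metis \<mu>'_def mset_rev mset_sort sum_mset_sum_list)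
  with cs assms have "is_partition n \<mu>'"
    by (auto simp: is_partition_def \<mu>'_def sorted_wrt_rev composition_tuples_def sum_list_concat_nat
        intro: gr0I)
  moreover have "cs \<in> refinements \<mu> (mset \<mu>')" "length \<mu>' = L"
    using cs by (auto simp: refinements_def \<mu>'_def)
  ultimately show "cs \<in> (\<Union>\<mu>'\<in>{\<mu>'. is_partition n \<mu>' \<and> length \<mu>' = L}. refinements \<mu> (mset \<mu>'))"
    by blast
qed

lemma sum_tcoef_mult_tcoef:
  assumes "is_partition n \<mu>" "is_partition n \<nu>"
  shows "(\<Sum>\<mu>'\<in>{\<mu>'. is_partition n \<mu>' \<and> length \<mu>' = length \<mu> + s}. tcoef \<mu> \<mu>' * tcoef \<mu>' \<nu>)
    = (length \<nu> - length \<mu> choose s) * tcoef \<mu> \<nu>"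
proof -
  let ?P = "{\<mu>'. is_partition n \<mu>' \<and> length \<mu>' = length \<mu> + s}"
  have "tcoef \<mu> \<mu>' * tcoef \<mu>' \<nu> =
      (\<Sum>cs\<in>refinements \<mu> (mset \<mu>'). refinement_count (concat cs) (mset \<nu>))" for \<mu>'
  proof -
    have "(\<Sum>cs\<in>refinements \<mu> (mset \<mu>'). refinement_count (concat cs) (mset \<nu>)) =
        (\<Sum>cs\<in>refinements \<mu> (mset \<mu>'). refinement_count \<mu>' (mset \<nu>))"
      by (intro sum.cong refl refinement_count_perm) (simp add: refinements_def)
    then show ?thesis
      by (simp add: tcoef_eq_refinement_count refinement_count_def)
  qed
  then have "(\<Sum>\<mu>'\<in>?P. tcoef \<mu> \<mu>' * tcoef \<mu>' \<nu>) =
      (\<Sum>\<mu>'\<in>?P. \<Sum>cs\<in>refinements \<mu> (mset \<mu>'). refinement_count (concat cs) (mset \<nu>))"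
    by simp
  also have "\<dots> = (\<Sum>cs\<in>(\<Union>\<mu>'\<in>?P. refinements \<mu> (mset \<mu>')). refinement_count (concat cs) (mset \<nu>))"
    by (rule sum.UNION_disjoint[symmetric])
      (auto simp: finite_partitions finite_refinements, auto simp: refinements_def dest: partition_eqI)
  also have "\<dots> = (length \<nu> - length \<mu> choose s) * tcoef \<mu> \<nu>"
    using assms(1) zero_not_in_partition[OF assms(1)]
    by (simp add: refinements_partitions_UN sum_composition_tuples_refinement_count
        tcoef_eq_refinement_count)
  finally show ?thesis .
qed

section \<open>Chains of partitions\<close>

definition partition_chains :: "nat \<Rightarrow> nat list \<Rightarrow> nat list \<Rightarrow> nat list list set" where
  "partition_chains n \<mu> ss = {ms. length ms = length ss \<and>
     (\<forall>i<length ss. is_partition n (ms ! i) \<and>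
        length (ms ! i) = length (if i = 0 then \<mu> else ms ! (i - 1)) + ss ! i)}"

lemma partition_chains_Nil [simp]: "partition_chains n \<mu> [] = {[]}"
  by (auto simp: partition_chains_def)

lemma partition_chains_Cons:
  "partition_chains n \<mu> (s # ss) = (\<lambda>(m, ms). m # ms) `
    (SIGMA m:{m. is_partition n m \<and> length m = length \<mu> + s}. partition_chains n m ss)"
  by (auto simp: partition_chains_def length_Suc_conv All_less_Suc2 nth_Cons' image_iff)

lemma finite_partitions_length: "finite {m. is_partition n m \<and> length m = l}"
  using finite_partitions by (rule finite_subset[rotated]) auto

lemma finite_partition_chains: "finite (partition_chains n \<mu> ss)"
  by (induction ss arbitrary: \<mu>) (simp_all add: partition_chains_Cons finite_partitions_length)

lemma sum_partition_chains_Cons: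
  "(\<Sum>ms\<in>partition_chains n \<mu> (s # ss). tchain \<mu> ms \<nu>) =
    (\<Sum>m | is_partition n m \<and> length m = length \<mu> + s.
      tcoef \<mu> m * (\<Sum>ms\<in>partition_chains n m ss. tchain m ms \<nu>))"
proof -
  let ?P = "{m. is_partition n m \<and> length m = length \<mu> + s}"
  have "inj_on (\<lambda>(m, ms). m # ms) (SIGMA m:?P. partition_chains n m ss)"
    by (auto simp: inj_on_def)
  then have "(\<Sum>ms\<in>partition_chains n \<mu> (s # ss). tchain \<mu> ms \<nu>) =
      (\<Sum>(m, ms)\<in>(SIGMA m:?P. partition_chains n m ss). tchain \<mu> (m # ms) \<nu>)"
    unfolding partition_chains_Cons by (subst sum.reindex) (auto intro!: sum.cong)
  also have "\<dots> = (\<Sum>m\<in>?P. tcoef \<mu> m * (\<Sum>ms\<in>partition_chains n m ss. tchain m ms \<nu>))"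
    by (simp add: sum.Sigma[symmetric] finite_partition_chains finite_partitions_length
        sum_distrib_left)
  finally show ?thesis .
qed

definition multinomial :: "nat \<Rightarrow> nat list \<Rightarrow> real" where
  "multinomial d ss = real (fact d) / (real (prod_list (map fact ss)) * real (fact (d - sum_list ss)))"

lemma multinomial_Nil [simp]: "multinomial d [] = 1"
  by (simp add: multinomial_def)

lemma multinomial_Cons:
  assumes "s \<le> d"
  shows "multinomial d (s # ss) = real (d choose s) * multinomial (d - s) ss"
proof -
  have "real (d choose s) = fact d / (fact s * fact (d - s))"
    using assms by (simp add: binomial_fact)
  moreover have "real (prod_list (map fact ss)) \<noteq> 0"
    by (induction ss) auto
  ultimately show ?thesis
    by (simp add: multinomial_def field_simps)
qed

lemma sum_partition_chains_tchain:
  assumes "is_partition n \<mu>" "is_partition n \<nu>" "sum_list ss \<le> length \<nu> - length \<mu>"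
  shows "real (\<Sum>ms\<in>partition_chains n \<mu> ss. tchain \<mu> ms \<nu>) =
    multinomial (length \<nu> - length \<mu>) ss * real (tcoef \<mu> \<nu>)"
  using assms(1,3)
proof (induction ss arbitrary: \<mu>)
  case (Cons s ss)
  define d where "d = length \<nu> - length \<mu>"
  let ?P = "{m. is_partition n m \<and> length m = length \<mu> + s}"
  have "real (\<Sum>ms\<in>partition_chains n \<mu> (s # ss). tchain \<mu> ms \<nu>) =
      (\<Sum>m\<in>?P. real (tcoef \<mu> m) * real (\<Sum>ms\<in>partition_chains n m ss. tchain m ms \<nu>))"
    by (simp add: sum_partition_chains_Cons)
  also have "\<dots> = (\<Sum>m\<in>?P. multinomial (d - s) ss * real (tcoef \<mu> m * tcoef m \<nu>))"
  proof (intro sum.cong refl)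
    fix m assume m: "m \<in> ?P"
    then have "length \<nu> - length m = d - s" "sum_list ss \<le> length \<nu> - length m"
      using Cons.prems(2) by (auto simp: d_def)
    with m Cons.IH show "real (tcoef \<mu> m) * real (\<Sum>ms\<in>partition_chains n m ss. tchain m ms \<nu>) =
        multinomial (d - s) ss * real (tcoef \<mu> m * tcoef m \<nu>)"
      by simp
  qed
  also have "\<dots> = multinomial (d - s) ss * real ((d choose s) * tcoef \<mu> \<nu>)"
    using sum_tcoef_mult_tcoef[OF Cons.prems(1) assms(2), of s]
    by (simp only: d_def flip: sum_distrib_left of_nat_sum)
  also have "\<dots> = multinomial d (s # ss) * real (tcoef \<mu> \<nu>)"
    using Cons.prems(2) by (simp add: multinomial_Cons d_def)
  finally show ?case
    by (simp only: d_def)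
qed simp

theorem lemma6p1:
  fixes n :: nat and \<mu> \<nu> :: "nat list"
  assumes "is_partition n \<mu>" and "is_partition n \<nu>" and "length \<mu> \<le> length \<nu>"
  shows "(\<forall>s. s \<le> length \<nu> - length \<mu> \<longrightarrow>
           (\<Sum>\<mu>'\<in>{\<mu>'. is_partition n \<mu>' \<and> length \<mu>' = length \<mu> + s}.
              tcoef \<mu> \<mu>' * tcoef \<mu>' \<nu>)
           = (length \<nu> - length \<mu> choose s) * tcoef \<mu> \<nu>)
       \<and> (\<forall>ss :: nat list. sum_list ss \<le> length \<nu> - length \<mu> \<longrightarrow>
           real (\<Sum>ms\<in>{ms. length ms = length ss \<and>
                   (\<forall>i<length ss. is_partition n (ms ! i) \<and>
                      length (ms ! i) = length (if i = 0 then \<mu> else ms ! (i - 1)) + ss ! i)}.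
                 tchain \<mu> ms \<nu>)
           = real (fact (length \<nu> - length \<mu>)) /
               (real (prod_list (map fact ss)) * real (fact (length \<nu> - length \<mu> - sum_list ss)))
             * real (tcoef \<mu> \<nu>))"
  using sum_tcoef_mult_tcoef[OF assms(1,2)] sum_partition_chains_tchain[OF assms(1,2)]
  unfolding partition_chains_def multinomial_def by blast

end
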